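(* Let $\mu$ be an infinite cardinal. Then there is a strong $\mu^+$-system $S = \langle I \times \kappa, \mathcal{R}\rangle$ such that $|\mathcal{R}| = \mu$ and $S$ has no cofinal branch.
   Context: Let $\lambda$ be an infinite regular cardinal. A binary relation $R$ on a set $X$ is tree-like if whenever $a <_R c$ and $b <_R c$, then $a,b$ are $R$-comparable (i.e. $a=b$, $a<_R b$ or $b<_R a$). A $\lambda$-system is $S=\langle\{\{\alpha\}\times\kappa_\alpha\mid\alpha\in I\},\mathcal{R}\rangle$ where: $I\subseteq\lambda$ is unbounded and $0<\kappa_\alpha<\lambda$ for $\alpha\in I$ (the $\alpha$-th level is $S_\alpha=\{\alpha\}\times\kappa_\alpha$, and $S$ also denotes the union of the levels); $\mathcal{R}$ is a set of binary, transitive, tree-like relations on $S$ with $|\mathcal{R}|<\lambda$; for all $R\in\mathcal{R}$, if $(\alpha_0,\beta_0)<_R(\alpha_1,\beta_1)$ then $\alpha_0<\alpha_1$; and for all $\alpha_0<\alpha_1$ in $I$ there are $\beta_0<\kappa_{\alpha_0}$, $\beta_1<\kappa_{\alpha_1}$, $R\in\mathcal{R}$ with $(\alpha_0,\beta_0)<_R(\alpha_1,\beta_1)$. It is a strong $\lambda$-system if moreover for all $\alpha_0<\alpha_1$ in $I$ and every $\beta_1<\kappa_{\alpha_1}$ there are $\beta_0<\kappa_{\alpha_0}$ and $R\in\mathcal{R}$ with $(\alpha_0,\beta_0)<_R(\alpha_1,\beta_1)$. $\langle I\times\kappa,\mathcal{R}\rangle$ denotes a system with $\kappa_\alpha=\kappa$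 for all $\alpha\in I$. A branch of $S$ through $R\in\mathcal{R}$ is a set $b\subseteq S$ any two elements of which are $R$-comparable; it is cofinal if $b\cap S_\alpha\neq\emptyset$ for unboundedly many $\alpha\in I$. $S$ has a cofinal branch if it has a cofinal branch through some $R\in\mathcal{R}$. *)

theory Defs
  imports Main
begin

text \<open>Infinite cardinals are represented as cardinal well-orders (Card_order r);
  the successor cardinal is cardSuc r.  A lambda-system is given by the well-order
  lam (levels are elements of Field lam), an index set I, level sets kap alpha
  (the alpha-th level is {alpha} x kap alpha) and a set Rs of strict relations.\<close>

definition lvl_less :: "'l rel \<Rightarrow> 'l \<Rightarrow> 'l \<Rightarrow> bool" where
  "lvl_less lam a b \<longleftrightarrow> (a, b) \<in> lam \<and> a \<noteq> b"

definition unbounded_in :: "'l rel \<Rightarrow> 'l set \<Rightarrow> bool" where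
  "unbounded_in lam I \<longleftrightarrow> I \<subseteq> Field lam \<and> (\<forall>a\<in>Field lam. \<exists>b\<in>I. (a, b) \<in> lam)"

definition tree_like :: "'x rel \<Rightarrow> bool" where
  "tree_like R \<longleftrightarrow> (\<forall>a b c. (a, c) \<in> R \<and> (b, c) \<in> R \<longrightarrow> a = b \<or> (a, b) \<in> R \<or> (b, a) \<in> R)"

definition lambda_system ::
  "'l rel \<Rightarrow> 'l set \<Rightarrow> ('l \<Rightarrow> 'k set) \<Rightarrow> ('l \<times> 'k) rel set \<Rightarrow> bool" where
  "lambda_system lam I kap Rs \<longleftrightarrow>
     unbounded_in lam I \<and>
     (\<forall>a\<in>I. kap a \<noteq> {} \<and> (card_of (kap a), lam) \<in> ordLess) \<and>
     (card_of Rs, lam) \<in> ordLess \<and>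
     (\<forall>R\<in>Rs. R \<subseteq> Sigma I kap \<times> Sigma I kap \<and> trans R \<and> tree_like R) \<and>
     (\<forall>R\<in>Rs. \<forall>a0 b0 a1 b1. ((a0, b0), (a1, b1)) \<in> R \<longrightarrow> lvl_less lam a0 a1) \<and>
     (\<forall>a0\<in>I. \<forall>a1\<in>I. lvl_less lam a0 a1 \<longrightarrow>
        (\<exists>b0\<in>kap a0. \<exists>b1\<in>kap a1. \<exists>R\<in>Rs. ((a0, b0), (a1, b1)) \<in> R))"

definition strong_lambda_system ::
  "'l rel \<Rightarrow> 'l set \<Rightarrow> ('l \<Rightarrow> 'k set) \<Rightarrow> ('l \<times> 'k) rel set \<Rightarrow> bool" where
  "strong_lambda_system lam I kap Rs \<longleftrightarrow>
     lambda_system lam I kap Rs \<and>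
     (\<forall>a0\<in>I. \<forall>a1\<in>I. lvl_less lam a0 a1 \<longrightarrow>
        (\<forall>b1\<in>kap a1. \<exists>b0\<in>kap a0. \<exists>R\<in>Rs. ((a0, b0), (a1, b1)) \<in> R))"

definition is_branch :: "'l set \<Rightarrow> ('l \<Rightarrow> 'k set) \<Rightarrow> ('l \<times> 'k) rel \<Rightarrow> ('l \<times> 'k) set \<Rightarrow> bool" where
  "is_branch I kap R b \<longleftrightarrow> b \<subseteq> Sigma I kap \<and>
     (\<forall>x\<in>b. \<forall>y\<in>b. x = y \<or> (x, y) \<in> R \<or> (y, x) \<in> R)"

definition cofinal_set :: "'l rel \<Rightarrow> 'l set \<Rightarrow> ('l \<Rightarrow> 'k set) \<Rightarrow> ('l \<times> 'k) set \<Rightarrow> bool" where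
  "cofinal_set lam I kap b \<longleftrightarrow> unbounded_in lam {a\<in>I. b \<inter> ({a} \<times> kap a) \<noteq> {}}"

definition has_cofinal_branch ::
  "'l rel \<Rightarrow> 'l set \<Rightarrow> ('l \<Rightarrow> 'k set) \<Rightarrow> ('l \<times> 'k) rel set \<Rightarrow> bool" where
  "has_cofinal_branch lam I kap Rs \<longleftrightarrow>
     (\<exists>R\<in>Rs. \<exists>b. is_branch I kap R b \<and> cofinal_set lam I kap b)"

end

theory Submission
  imports Defs
begin

unbundle cardinal_syntax

text \<open>Take the levels to be the successor cardinal \<lambda> of \<mu> and every level to be \<mu>.
  Below a node (\<beta>, \<delta>) the \<mu>-many earlier levels \<alpha> are coloured injectively by colours in
  \<mu> - {\<delta>}, and the relation of colour i puts (\<alpha>, i) below (\<beta>, \<delta>) when \<alpha> gets colour i.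
  Injectivity makes each relation tree-like, every node has a predecessor on each earlier level,
  and since a node with second coordinate i is never above anything in the relation of colour i,
  all its chains have length at most two. So every branch is finite, hence bounded in \<lambda>.\<close>

lemma (in wo_rel) finite_has_max:
  assumes "finite L" "L \<noteq> {}" "L \<subseteq> Field r"
  shows "\<exists>m\<in>L. \<forall>l\<in>L. (l, m) \<in> r"
  using assms
proof (induction L rule: finite_ne_induct)
  case (singleton x)
  then show ?case using REFL by (auto simp: refl_on_def)
next
  case (insert x F)
  then obtain m where m: "m \<in> F" "\<forall>l\<in>F. (l, m) \<in> r" by auto
  with insert.prems have "x \<in> Field r" "m \<in> Field r" by auto
  then have "(x, max2 x m) \<in> r" "(m, max2 x m) \<in> r" "max2 x m \<in> insert x F"
    using max2_greater_among[of x m] m(1) by auto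
  with m(2) TRANS show ?case unfolding trans_def by blast
qed

lemma finite_not_unbounded_in:
  assumes lam: "Card_order lam" "infinite (Field lam)" and "finite L"
  shows "\<not> unbounded_in lam L"
proof
  assume unb: "unbounded_in lam L"
  then have L: "L \<subseteq> Field lam" "L \<noteq> {}"
    using lam(2) unfolding unbounded_in_def by fastforce+
  have wo: "wo_rel lam" using lam(1) by (rule Card_order_wo_rel)
  obtain m where m: "m \<in> L" "\<forall>l\<in>L. (l, m) \<in> lam"
    using wo_rel.finite_has_max[OF wo \<open>finite L\<close> L(2,1)] by blast
  obtain b where b: "b \<in> Field lam" "m \<noteq> b" "(m, b) \<in> lam"
    using infinite_Card_order_limit[OF lam] m(1) L(1) by blast
  then obtain l where "l \<in> L" "(b, l) \<in> lam" using unb unfolding unbounded_in_def by blast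
  then have "(b, m) \<in> lam" using m(2) wo_rel.TRANS[OF wo] unfolding trans_def by blast
  then show False using b wo_rel.ANTISYM[OF wo] unfolding antisym_def by blast
qed

lemma inj_into_Field_minus_if_ordLess_cardSuc:
  assumes r: "Card_order r" "infinite (Field r)" and A: "|A| <o cardSuc r"
  shows "\<exists>h. inj_on h A \<and> h ` A \<subseteq> Field r - {\<delta>}"
proof -
  have "|A| \<le>o r" using A cardSuc_ordLeq_ordLess[OF r(1) card_of_Card_order] by blast
  also have "r =o |Field r|" using card_of_Field_ordIso[OF r(1)] by (rule ordIso_symmetric)
  also have "|Field r| =o |Field r - {\<delta>}|"
    using infinite_imp_bij_betw[OF r(2)] card_of_ordIso by blast
  finally show ?thesis using card_of_ordLeq by blast
qed

lemma exists_underS_cardSuc_ordLeq: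
  assumes r: "Card_order r"
  shows "\<exists>\<beta>\<in>Field (cardSuc r). |Field r| \<le>o |underS (cardSuc r) \<beta>|"
proof -
  have "Well_order (cardSuc r)" "Well_order r"
    using r cardSuc_Card_order unfolding card_order_on_def by blast+
  then obtain \<beta> where
    \<beta>: "\<beta> \<in> Field (cardSuc r)" "r =o Restr (cardSuc r) (underS (cardSuc r) \<beta>)"
    using ordLess_iff_ordIso_Restr cardSuc_greater[OF r] by blast
  have "|Field r| \<le>o |Field (Restr (cardSuc r) (underS (cardSuc r) \<beta>))|"
    using card_of_mono2 \<beta>(2) ordIso_imp_ordLeq by blast
  also have "|Field (Restr (cardSuc r) (underS (cardSuc r) \<beta>))| \<le>o |underS (cardSuc r) \<beta>|"
    by (rule card_of_mono1) (auto simp: Field_def)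
  finally show ?thesis using \<beta>(1) by blast
qed

locale level_colouring =
  fixes lam :: "'l rel" and K :: "'k set" and g :: "'l \<Rightarrow> 'k \<Rightarrow> 'l \<Rightarrow> 'k"
  assumes colour_inj: "\<beta> \<in> Field lam \<Longrightarrow> \<delta> \<in> K \<Longrightarrow> inj_on (g \<beta> \<delta>) (underS lam \<beta>)"
    and colour_range: "\<beta> \<in> Field lam \<Longrightarrow> \<delta> \<in> K \<Longrightarrow> g \<beta> \<delta> ` underS lam \<beta> \<subseteq> K - {\<delta>}"
begin

definition colour_rel :: "'k \<Rightarrow> ('l \<times> 'k) rel" where
  "colour_rel i = {((\<alpha>, i), (\<beta>, \<delta>)) | \<alpha> \<beta> \<delta>. \<delta> \<in> K \<and> \<alpha> \<in> underS lam \<beta> \<and> g \<beta> \<delta> \<alpha> = i}"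

lemma colour_rel_iff:
  "((\<alpha>, i), (\<beta>, \<delta>)) \<in> colour_rel j \<longleftrightarrow> i = j \<and> \<delta> \<in> K \<and> \<alpha> \<in> underS lam \<beta> \<and> g \<beta> \<delta> \<alpha> = i"
  unfolding colour_rel_def by auto

lemma colour_rel_D:
  assumes "((\<alpha>, i), (\<beta>, \<delta>)) \<in> colour_rel j"
  shows "i \<in> K" "i \<noteq> \<delta>" "\<delta> \<in> K" "\<alpha> \<in> Field lam" "\<beta> \<in> Field lam" "lvl_less lam \<alpha> \<beta>"
proof -
  have h: "\<delta> \<in> K" "\<alpha> \<in> underS lam \<beta>" "g \<beta> \<delta> \<alpha> = i"
    using assms unfolding colour_rel_iff by auto
  then show "\<alpha> \<in> Field lam" "\<beta> \<in> Field lam" "lvl_less lam \<alpha> \<beta>" "\<delta> \<in> K"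
    unfolding underS_def lvl_less_def Field_def by auto
  then show "i \<in> K" "i \<noteq> \<delta>" using colour_range h by blast+
qed

lemma colour_rel_below:
  assumes "\<delta> \<in> K" "\<alpha> \<in> underS lam \<beta>"
  shows "((\<alpha>, g \<beta> \<delta> \<alpha>), (\<beta>, \<delta>)) \<in> colour_rel (g \<beta> \<delta> \<alpha>)"
  using assms unfolding colour_rel_iff by simp

lemma colour_rel_no_chain:
  assumes "(x, y) \<in> colour_rel i"
  shows "(y, z) \<notin> colour_rel i"
proof
  obtain \<alpha> \<beta> \<delta> where xy: "x = (\<alpha>, i)" "y = (\<beta>, \<delta>)"
    using assms unfolding colour_rel_def by blast
  then have "i \<noteq> \<delta>" using colour_rel_D(2) assms by blast
  moreover assume "(y, z) \<in> colour_rel i"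
  then have "\<delta> = i" by (cases z) (simp add: xy colour_rel_iff)
  ultimately show False by simp
qed

lemma trans_colour_rel: "trans (colour_rel i)"
  using colour_rel_no_chain unfolding trans_def by blast

lemma tree_like_colour_rel: "tree_like (colour_rel i)"
  unfolding tree_like_def
proof (intro allI impI)
  fix x y z assume "(x, z) \<in> colour_rel i \<and> (y, z) \<in> colour_rel i"
  then obtain \<alpha> \<alpha>' \<beta> \<delta> where eq: "x = (\<alpha>, i)" "y = (\<alpha>', i)" "z = (\<beta>, \<delta>)" and
    h: "\<delta> \<in> K" "\<alpha> \<in> underS lam \<beta>" "\<alpha>' \<in> underS lam \<beta>" "g \<beta> \<delta> \<alpha> = g \<beta> \<delta> \<alpha>'"
    unfolding colour_rel_def by auto
  then have "\<beta> \<in> Field lam" unfolding underS_def Field_def by auto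
  then have "\<alpha> = \<alpha>'" using colour_inj h unfolding inj_on_def by blast
  then show "x = y \<or> (x, y) \<in> colour_rel i \<or> (y, x) \<in> colour_rel i" using eq by simp
qed

lemma branch_colour_rel_finite:
  assumes "is_branch I kap (colour_rel i) b"
  shows "finite b"
proof (rule ccontr)
  assume "infinite b"
  then obtain x y z where "{x, y, z} \<subseteq> b" "x \<noteq> y" "y \<noteq> z" "x \<noteq> z"
    using infinite_arbitrarily_large[of b 3] by (metis card_3_iff)
  then have "(x, y) \<in> colour_rel i \<or> (y, x) \<in> colour_rel i"
    "(y, z) \<in> colour_rel i \<or> (z, y) \<in> colour_rel i"
    "(x, z) \<in> colour_rel i \<or> (z, x) \<in> colour_rel i"
    using assms unfolding is_branch_def by blast+
  then show False using colour_rel_no_chain by blast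
qed

lemma underS_ordLeq_colour_rels:
  assumes "\<beta> \<in> Field lam" "\<delta> \<in> K"
  shows "|underS lam \<beta>| \<le>o |colour_rel ` K|"
proof (rule card_of_ordLeqI[where f = "\<lambda>\<alpha>. colour_rel (g \<beta> \<delta> \<alpha>)"])
  show "inj_on (\<lambda>\<alpha>. colour_rel (g \<beta> \<delta> \<alpha>)) (underS lam \<beta>)"
  proof (rule inj_onI)
    fix \<alpha> \<alpha>' assume \<alpha>: "\<alpha> \<in> underS lam \<beta>" "\<alpha>' \<in> underS lam \<beta>"
      and eq: "colour_rel (g \<beta> \<delta> \<alpha>) = colour_rel (g \<beta> \<delta> \<alpha>')"
    have "((\<alpha>, g \<beta> \<delta> \<alpha>), (\<beta>, \<delta>)) \<in> colour_rel (g \<beta> \<delta> \<alpha>')"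
      using colour_rel_below[OF assms(2) \<alpha>(1)] eq by simp
    then have "g \<beta> \<delta> \<alpha> = g \<beta> \<delta> \<alpha>'" unfolding colour_rel_iff by blast
    then show "\<alpha> = \<alpha>'" using colour_inj[OF assms] \<alpha> unfolding inj_on_def by blast
  qed
qed (use colour_range[OF assms] in blast)

theorem strong_lambda_system_colour_rels:
  assumes lam: "Card_order lam" and K: "K \<noteq> {}" "|K| <o lam"
  shows "strong_lambda_system lam (Field lam) (\<lambda>_. K) (colour_rel ` K)"
proof -
  have strong: "\<exists>b0\<in>K. \<exists>R\<in>colour_rel ` K. ((a0, b0), (a1, b1)) \<in> R"
    if "a1 \<in> Field lam" "lvl_less lam a0 a1" "b1 \<in> K" for a0 a1 b1
  proof -
    have "a0 \<in> underS lam a1" using that(2) unfolding lvl_less_def underS_def by auto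
    then have "g a1 b1 a0 \<in> K" "((a0, g a1 b1 a0), (a1, b1)) \<in> colour_rel (g a1 b1 a0)"
      using colour_range[OF that(1,3)] colour_rel_below[OF that(3)] by auto
    then show ?thesis by blast
  qed
  show ?thesis
    unfolding strong_lambda_system_def lambda_system_def
  proof (intro conjI ballI allI impI)
    show "unbounded_in lam (Field lam)"
      using Card_order_wo_rel[OF lam] wo_rel.REFL unfolding unbounded_in_def refl_on_def by blast
  next
    show "K \<noteq> {}" "|K| <o lam" by (fact K)+
  next
    show "|colour_rel ` K| <o lam" using card_of_image K(2) by (rule ordLeq_ordLess_trans)
  next
    fix R assume "R \<in> colour_rel ` K"
    then obtain i where R: "R = colour_rel i" by blast
    show "R \<subseteq> Sigma (Field lam) (\<lambda>_. K) \<times> Sigma (Field lam) (\<lambda>_. K)"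
      unfolding R
    proof
      fix p assume p: "p \<in> colour_rel i"
      then obtain \<alpha> j \<beta> \<delta> where "p = ((\<alpha>, j), (\<beta>, \<delta>))" unfolding colour_rel_def by blast
      with colour_rel_D[of \<alpha> j \<beta> \<delta> i] p
      show "p \<in> Sigma (Field lam) (\<lambda>_. K) \<times> Sigma (Field lam) (\<lambda>_. K)" by simp
    qed
    show "trans R" "tree_like R" unfolding R by (fact trans_colour_rel tree_like_colour_rel)+
  next
    fix R a0 b0 a1 b1 assume "R \<in> colour_rel ` K" "((a0, b0), (a1, b1)) \<in> R"
    then show "lvl_less lam a0 a1" using colour_rel_D(6) by blast
  next
    fix a0 a1 assume "a0 \<in> Field lam" "a1 \<in> Field lam" "lvl_less lam a0 a1"
    moreover obtain b1 where "b1 \<in> K" using K(1) by blast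
    ultimately show "\<exists>b0\<in>K. \<exists>b1\<in>K. \<exists>R\<in>colour_rel ` K. ((a0, b0), (a1, b1)) \<in> R"
      using strong[of a1 a0 b1] by blast
  next
    fix a0 a1 b1 assume "a0 \<in> Field lam" "a1 \<in> Field lam" "lvl_less lam a0 a1" "b1 \<in> K"
    then show "\<exists>b0\<in>K. \<exists>R\<in>colour_rel ` K. ((a0, b0), (a1, b1)) \<in> R"
      using strong by simp
  qed
qed

theorem no_cofinal_branch_colour_rels:
  assumes "Card_order lam" "infinite (Field lam)"
  shows "\<not> has_cofinal_branch lam (Field lam) (\<lambda>_. K) (colour_rel ` K)"
proof
  assume "has_cofinal_branch lam (Field lam) (\<lambda>_. K) (colour_rel ` K)"
  then obtain i b where "is_branch (Field lam) (\<lambda>_. K) (colour_rel i) b"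
    and cof: "unbounded_in lam {a \<in> Field lam. b \<inter> ({a} \<times> K) \<noteq> {}}"
    unfolding has_cofinal_branch_def cofinal_set_def by blast
  then have "finite (fst ` b)" using branch_colour_rel_finite by blast
  moreover have "{a \<in> Field lam. b \<inter> ({a} \<times> K) \<noteq> {}} \<subseteq> fst ` b" by force
  ultimately have "finite {a \<in> Field lam. b \<inter> ({a} \<times> K) \<noteq> {}}" by (rule finite_subset[rotated])
  then show False using cof finite_not_unbounded_in[OF assms] by blast
qed

end

theorem mainTheorem3:
  fixes r :: "'a rel"
  assumes "Card_order r" and "infinite (Field r)"
  shows "\<exists>(I :: 'a set set) (K :: 'a set) (Rs :: ('a set \<times> 'a) rel set).
           strong_lambda_system (cardSuc r) I (\<lambda>_. K) Rs \<and>
           (card_of Rs, r) \<in> ordIso \<and>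
           \<not> has_cofinal_branch (cardSuc r) I (\<lambda>_. K) Rs"
proof -
  have lam: "Card_order (cardSuc r)" "infinite (Field (cardSuc r))"
    using cardSuc_Card_order cardSuc_finite assms by blast+
  have colourings:
    "\<exists>h. inj_on h (underS (cardSuc r) \<beta>) \<and> h ` underS (cardSuc r) \<beta> \<subseteq> Field r - {\<delta>}"
    if "\<beta> \<in> Field (cardSuc r)" for \<beta> \<delta>
    using inj_into_Field_minus_if_ordLess_cardSuc[OF assms card_of_underS[OF lam(1) that]] .
  define g where "g \<beta> \<delta> =
    (SOME h. inj_on h (underS (cardSuc r) \<beta>) \<and> h ` underS (cardSuc r) \<beta> \<subseteq> Field r - {\<delta>})" for \<beta> \<delta>
  interpret level_colouring "cardSuc r" "Field r" g
    by unfold_locales (use someI_ex[OF colourings] in \<open>auto simp: g_def\<close>)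
  have Fr: "|Field r| =o r" using card_of_Field_ordIso[OF assms(1)] .
  obtain \<delta> where \<delta>: "\<delta> \<in> Field r" using assms(2) by fastforce
  obtain \<beta> where \<beta>: "\<beta> \<in> Field (cardSuc r)" "|Field r| \<le>o |underS (cardSuc r) \<beta>|"
    using exists_underS_cardSuc_ordLeq[OF assms(1)] by blast
  have "|colour_rel ` Field r| =o |Field r|"
    using card_of_image ordLeq_transitive[OF \<beta>(2) underS_ordLeq_colour_rels[OF \<beta>(1) \<delta>]]
    by (rule ordIso_iff_ordLeq[THEN iffD2, OF conjI])
  then have "|colour_rel ` Field r| =o r" using Fr by (rule ordIso_transitive)
  moreover have "|Field r| <o cardSuc r"
    using Fr cardSuc_greater[OF assms(1)] by (rule ordIso_ordLess_trans)
  ultimately show ?thesis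
    using strong_lambda_system_colour_rels[OF lam(1)] no_cofinal_branch_colour_rels[OF lam] \<delta>
    by (intro exI[of _ "Field (cardSuc r)"] exI[of _ "Field r"] exI[of _ "colour_rel ` Field r"]) blast
qed

end
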